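(* If $w$ is an almost periodic infinite word over a finite alphabet $A$ and $H$ is a finite graph with loops allowed on vertex set $A$, then $\mathcal{P}(w,H)$ is a minimal hereditary property above the Bell number.
   Context: Graphs in classes are finite, simple and loopless; a property (class) is a set of graphs closed under isomorphism, hereditary if closed under induced subgraphs. The speed $\mathcal{X}_n$ is the number of graphs in $\mathcal{X}$ on vertex set $\{1,\dots,n\}$. A hereditary property is above the Bell number if $\mathcal{X}_n\ge n^{(1-o(1))n}$ (equivalently its speed is at least the Bell number $B_n$); it is a minimal property above the Bell number if it is above the Bell number and no proper hereditary subclass is above the Bell number. A word over $A$ is a map $w:S\to A$ with $S=\{1,\dots,n\}$ or $S=\mathbb{N}$, $w_i=w(i)$. A finite word $f$ is a factor of $w$ if for some $s\ge0$, $f_i=w_{i+s}$ for $1\le i\le|f|$. An infinite word $w$ is almost periodic if for every factor $f$ of $w$ there is $k_f$ such that every factor of $w$ of length at least $k_f$ contains $f$ as a factor. For $H$ with loops allowed on $A$ and positive integers $u_1<\dots<u_m$, $G_{w,H}(u_1,\dots,u_m)$ is the graph on $\{u_1,\dots,u_m\}$ where $u_iu_j$ is an edge iff either $|u_i-u_j|=1$ and $w_{u_i}w_{u_j}\notin E(H)$, or $|u_i-u_j|>1$ and $w_{u_i}w_{u_j}\in E(H)$ (equal letters $a$: this refers to a loop at $a$). $\mathcal{P}(w,H)$ is the class of all graphs isomorphic to some $G_{w,H}(u_1,\dots,u_m)$. *)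

theory Defs
  imports Complex_Main
begin

text \<open>Since properties are closed under isomorphism,
restricting vertex labels to nat loses nothing.\<close>

type_synonym graph = "nat set \<times> nat set set"

definition is_graph :: "graph \<Rightarrow> bool" where
  "is_graph G \<longleftrightarrow> finite (fst G) \<and>
     snd G \<subseteq> {{x, y} | x y. x \<in> fst G \<and> y \<in> fst G \<and> x \<noteq> y}"

definition graph_iso :: "graph \<Rightarrow> graph \<Rightarrow> bool" where
  "graph_iso G G' \<longleftrightarrow> (\<exists>f. bij_betw f (fst G) (fst G') \<and>
     (\<forall>x\<in>fst G. \<forall>y\<in>fst G. {x, y} \<in> snd G \<longleftrightarrow> {f x, f y} \<in> snd G'))"

definition induced_subgraph :: "graph \<Rightarrow> graph \<Rightarrow> bool" where
  "induced_subgraph G' G \<longleftrightarrow> fst G' \<subseteq> fst G \<and> snd G' = {e \<in> snd G. e \<subseteq> fst G'}"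

definition graph_property :: "graph set \<Rightarrow> bool" where
  "graph_property X \<longleftrightarrow> (\<forall>G\<in>X. is_graph G) \<and>
     (\<forall>G G'. G \<in> X \<longrightarrow> is_graph G' \<longrightarrow> graph_iso G G' \<longrightarrow> G' \<in> X)"

definition hereditary :: "graph set \<Rightarrow> bool" where
  "hereditary X \<longleftrightarrow> graph_property X \<and>
     (\<forall>G G'. G \<in> X \<longrightarrow> induced_subgraph G' G \<longrightarrow> G' \<in> X)"

definition speed :: "graph set \<Rightarrow> nat \<Rightarrow> nat" where
  "speed X n = card {G \<in> X. fst G = {1..n}}"

definition above_Bell :: "graph set \<Rightarrow> bool" where
  "above_Bell X \<longleftrightarrow> (\<exists>\<epsilon> :: nat \<Rightarrow> real. \<epsilon> \<longlonglongrightarrow> 0 \<and>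
     (\<forall>\<^sub>F n in sequentially. real (speed X n) \<ge> real n powr ((1 - \<epsilon> n) * real n)))"

definition minimal_above_Bell :: "graph set \<Rightarrow> bool" where
  "minimal_above_Bell X \<longleftrightarrow> hereditary X \<and> above_Bell X \<and>
     (\<forall>Y. hereditary Y \<longrightarrow> Y \<subset> X \<longrightarrow> \<not> above_Bell Y)"

text \<open>Infinite words are maps nat \<Rightarrow> 'a, read at positions 1, 2, 3, ...;
finite words are lists (list index i-1 holds letter f_i).\<close>
definition factor_of_word :: "'a list \<Rightarrow> (nat \<Rightarrow> 'a) \<Rightarrow> bool" where
  "factor_of_word f w \<longleftrightarrow> (\<exists>s. \<forall>i<length f. f ! i = w (i + 1 + s))"

definition factor_of_list :: "'a list \<Rightarrow> 'a list \<Rightarrow> bool" where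
  "factor_of_list f g \<longleftrightarrow> (\<exists>s. s + length f \<le> length g \<and> (\<forall>i<length f. f ! i = g ! (i + s)))"

definition almost_periodic :: "(nat \<Rightarrow> 'a) \<Rightarrow> bool" where
  "almost_periodic w \<longleftrightarrow> (\<forall>f. factor_of_word f w \<longrightarrow>
     (\<exists>k. \<forall>g. factor_of_word g w \<longrightarrow> length g \<ge> k \<longrightarrow> factor_of_list f g))"

text \<open>H (loops allowed) on alphabet A is given by a symmetric relation h on A;
h a a means a loop at a.\<close>
definition G_wH :: "(nat \<Rightarrow> 'a) \<Rightarrow> ('a \<Rightarrow> 'a \<Rightarrow> bool) \<Rightarrow> nat set \<Rightarrow> graph" where
  "G_wH w h U = (U, {{x, y} | x y. x \<in> U \<and> y \<in> U \<and> x \<noteq> y \<and>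
      (((x = y + 1 \<or> y = x + 1) \<and> \<not> h (w x) (w y)) \<or>
       (\<not> (x = y + 1 \<or> y = x + 1) \<and> h (w x) (w y)))})"

definition P_wH :: "(nat \<Rightarrow> 'a) \<Rightarrow> ('a \<Rightarrow> 'a \<Rightarrow> bool) \<Rightarrow> graph set" where
  "P_wH w h = {G. is_graph G \<and> (\<exists>U. finite U \<and> 0 \<notin> U \<and> graph_iso G (G_wH w h U))}"

end

theory Submission
  imports Defs "HOL-Combinatorics.Permutations" "HOL-Library.FuncSet"
begin

(* It is above the Bell number because every permutation p of
   {1..n} gives a graph of P(w,H) on {1..n} (positions 1..n relabelled by p), and p is
   recovered from this graph, the letters w o p and p^-1(1): once the letters are known,
   the edges tell which positions are consecutive.

   For minimality let Y be a proper hereditary subclass and G0 in P(w,H) - Y, realised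
   on positions inside {1..L}. By almost periodicity every window of some length K
   contains a shifted copy of w_1 ... w_L, hence an induced copy of G0; so no graph of Y
   is realised on a set U containing K consecutive positions. A graph of Y on {1..n} is
   then determined by its letters and by the splitting of U into runs of consecutive
   positions, all of length < K, which leaves at most (2 |A| K)^n n^(n - n/K) graphs:
   fewer than n^((1 - o(1)) n). *)

abbreviation consecutive :: "nat \<Rightarrow> nat \<Rightarrow> bool" where
  "consecutive x y \<equiv> x = y + 1 \<or> y = x + 1"

definition graph_on :: "nat set \<Rightarrow> (nat \<Rightarrow> nat \<Rightarrow> bool) \<Rightarrow> graph" where
  "graph_on V Q = (V, {{x, y} | x y. x \<in> V \<and> y \<in> V \<and> x \<noteq> y \<and> Q x y})"

lemma fst_graph_on [simp]: "fst (graph_on V Q) = V"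
  by (simp add: graph_on_def)

lemma is_graph_graph_on: "finite V \<Longrightarrow> is_graph (graph_on V Q)"
  unfolding is_graph_def graph_on_def by auto

lemma edge_graph_on:
  assumes "symp Q"
  shows "{a, b} \<in> snd (graph_on V Q) \<longleftrightarrow> a \<in> V \<and> b \<in> V \<and> a \<noteq> b \<and> Q a b"
  using assms unfolding graph_on_def by (auto simp: doubleton_eq_iff dest: sympD)

lemma graph_on_cong:
  assumes "\<And>x y. x \<in> V \<Longrightarrow> y \<in> V \<Longrightarrow> x \<noteq> y \<Longrightarrow> Q x y \<longleftrightarrow> Q' x y"
  shows "graph_on V Q = graph_on V Q'"
  using assms unfolding graph_on_def by blast

lemma graph_eq_graph_on:
  assumes "is_graph G"
  shows "G = graph_on (fst G) (\<lambda>x y. {x, y} \<in> snd G)"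
proof -
  have "snd G = {{x, y} | x y. x \<in> fst G \<and> y \<in> fst G \<and> x \<noteq> y \<and> {x, y} \<in> snd G}"
    using assms unfolding is_graph_def by blast
  then show ?thesis
    unfolding graph_on_def by (metis prod.collapse)
qed

lemma graph_iso_graph_on:
  assumes "bij_betw f V V'" "symp Q" "symp Q'"
    and "\<And>x y. x \<in> V \<Longrightarrow> y \<in> V \<Longrightarrow> Q x y \<longleftrightarrow> Q' (f x) (f y)"
  shows "graph_iso (graph_on V Q) (graph_on V' Q')"
proof -
  have "{x, y} \<in> snd (graph_on V Q) \<longleftrightarrow> {f x, f y} \<in> snd (graph_on V' Q')"
    if "x \<in> V" "y \<in> V" for x y
  proof -
    have "f x \<in> V'" "f y \<in> V'" "f x = f y \<longleftrightarrow> x = y"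
      using assms(1) that by (auto simp: bij_betw_def inj_on_eq_iff)
    then show ?thesis
      using that assms(4) by (simp add: edge_graph_on[OF assms(2)] edge_graph_on[OF assms(3)])
  qed
  then show ?thesis
    using assms(1) unfolding graph_iso_def fst_graph_on by blast
qed

lemma graph_iso_sym:
  assumes "graph_iso G G'"
  shows "graph_iso G' G"
proof -
  obtain f where f: "bij_betw f (fst G) (fst G')"
    and edges: "\<forall>x\<in>fst G. \<forall>y\<in>fst G. {x, y} \<in> snd G \<longleftrightarrow> {f x, f y} \<in> snd G'"
    using assms unfolding graph_iso_def by blast
  let ?g = "inv_into (fst G) f"
  have "?g x \<in> fst G \<and> f (?g x) = x" if "x \<in> fst G'" for x
    using f that by (auto simp: bij_betw_def inv_into_into f_inv_into_f)
  then have "\<forall>x\<in>fst G'. \<forall>y\<in>fst G'. {x, y} \<in> snd G' \<longleftrightarrow> {?g x, ?g y} \<in> snd G"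
    using edges by metis
  then show ?thesis
    using bij_betw_inv_into[OF f] unfolding graph_iso_def by blast
qed

lemma graph_iso_trans:
  assumes "graph_iso G G'" "graph_iso G' G''"
  shows "graph_iso G G''"
proof -
  obtain f where f: "bij_betw f (fst G) (fst G')"
    and ef: "\<forall>x\<in>fst G. \<forall>y\<in>fst G. {x, y} \<in> snd G \<longleftrightarrow> {f x, f y} \<in> snd G'"
    using assms(1) unfolding graph_iso_def by blast
  obtain g where g: "bij_betw g (fst G') (fst G'')"
    and eg: "\<forall>x\<in>fst G'. \<forall>y\<in>fst G'. {x, y} \<in> snd G' \<longleftrightarrow> {g x, g y} \<in> snd G''"
    using assms(2) unfolding graph_iso_def by blast
  have "f x \<in> fst G'" if "x \<in> fst G" for x
    using f that by (auto simp: bij_betw_def)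
  then have "\<forall>x\<in>fst G. \<forall>y\<in>fst G. {x, y} \<in> snd G \<longleftrightarrow> {(g \<circ> f) x, (g \<circ> f) y} \<in> snd G''"
    using ef eg by simp
  then show ?thesis
    using bij_betw_trans[OF f g] unfolding graph_iso_def by blast
qed

lemma is_graph_edgeE:
  assumes "is_graph G" "e \<in> snd G"
  obtains x y where "e = {x, y}" "x \<in> fst G" "y \<in> fst G" "x \<noteq> y"
  using assms unfolding is_graph_def by blast

lemma finite_graphs_on_vertex_set:
  assumes "finite V"
  shows "finite {G. is_graph G \<and> fst G = V}"
proof (rule finite_subset)
  show "{G. is_graph G \<and> fst G = V} \<subseteq> {V} \<times> Pow (Pow V)"
  proof
    fix G assume "G \<in> {G. is_graph G \<and> fst G = V}"
    then have "is_graph G" "fst G = V" by auto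
    then have "snd G \<subseteq> Pow V"
      by (auto elim: is_graph_edgeE)
    then show "G \<in> {V} \<times> Pow (Pow V)"
      using \<open>fst G = V\<close> by (cases G) auto
  qed
qed (use assms in simp)

lemma is_graph_induced_subgraph:
  assumes "is_graph G" "induced_subgraph G' G"
  shows "is_graph G'"
proof -
  have V: "fst G' \<subseteq> fst G" and E: "\<forall>e\<in>snd G'. e \<in> snd G \<and> e \<subseteq> fst G'"
    using assms(2) unfolding induced_subgraph_def by auto
  have "finite (fst G')"
    using assms(1) V unfolding is_graph_def by (meson finite_subset)
  moreover have "snd G' \<subseteq> {{x, y} | x y. x \<in> fst G' \<and> y \<in> fst G' \<and> x \<noteq> y}"
  proof
    fix e assume "e \<in> snd G'"
    then obtain x y where "e = {x, y}" "x \<noteq> y" "e \<subseteq> fst G'"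
      using assms(1) E by (metis is_graph_edgeE)
    then show "e \<in> {{x, y} | x y. x \<in> fst G' \<and> y \<in> fst G' \<and> x \<noteq> y}" by blast
  qed
  ultimately show ?thesis
    unfolding is_graph_def by blast
qed

lemma graph_iso_induced_subgraph:
  assumes "graph_iso G H" "induced_subgraph G' G"
  obtains H' where "induced_subgraph H' H" "graph_iso G' H'"
proof -
  obtain f where f: "bij_betw f (fst G) (fst H)"
    and edges: "\<forall>x\<in>fst G. \<forall>y\<in>fst G. {x, y} \<in> snd G \<longleftrightarrow> {f x, f y} \<in> snd H"
    using assms(1) unfolding graph_iso_def by blast
  have V: "fst G' \<subseteq> fst G" and E: "snd G' = {e \<in> snd G. e \<subseteq> fst G'}"
    using assms(2) unfolding induced_subgraph_def by auto
  define H' where "H' = (f ` fst G', {e \<in> snd H. e \<subseteq> f ` fst G'})"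
  have "induced_subgraph H' H"
    using f V unfolding H'_def induced_subgraph_def bij_betw_def by auto
  moreover have "bij_betw f (fst G') (fst H')"
    using f V unfolding H'_def by (auto intro: bij_betw_subset)
  moreover have "{x, y} \<in> snd G' \<longleftrightarrow> {f x, f y} \<in> snd H'" if "x \<in> fst G'" "y \<in> fst G'" for x y
    using edges V E that unfolding H'_def by auto
  ultimately show ?thesis
    using that unfolding graph_iso_def by blast
qed

lemma induced_subgraph_graph_on:
  "induced_subgraph H (graph_on V Q) \<longleftrightarrow> fst H \<subseteq> V \<and> H = graph_on (fst H) Q"
  unfolding induced_subgraph_def graph_on_def by (cases H) auto

lemma hereditary_mem_if_graph_on_subset:
  assumes "hereditary Y" "G \<in> Y" "graph_iso G (graph_on U Q)" "W \<subseteq> U"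
    and "is_graph G'" "graph_iso G' (graph_on W Q)"
  shows "G' \<in> Y"
proof -
  have "induced_subgraph (graph_on W Q) (graph_on U Q)"
    using assms(4) by (simp add: induced_subgraph_graph_on)
  then obtain H where H: "induced_subgraph H G" "graph_iso (graph_on W Q) H"
    using graph_iso_induced_subgraph[OF graph_iso_sym[OF assms(3)]] by blast
  have "H \<in> Y"
    using assms(1,2) H(1) unfolding hereditary_def by blast
  moreover have "graph_iso H G'"
    using graph_iso_sym[OF graph_iso_trans[OF assms(6) H(2)]] .
  ultimately show ?thesis
    using assms(1,5) unfolding hereditary_def graph_property_def by blast
qed

definition wH_adjacent :: "(nat \<Rightarrow> 'a) \<Rightarrow> ('a \<Rightarrow> 'a \<Rightarrow> bool) \<Rightarrow> nat \<Rightarrow> nat \<Rightarrow> bool" where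
  "wH_adjacent w h x y \<longleftrightarrow> (consecutive x y \<longleftrightarrow> \<not> h (w x) (w y))"

lemma symp_wH_adjacent: "symp h \<Longrightarrow> symp (wH_adjacent w h)"
  unfolding wH_adjacent_def by (auto intro!: sympI dest: sympD)

lemma G_wH_eq_graph_on: "G_wH w h U = graph_on U (wH_adjacent w h)"
  unfolding G_wH_def graph_on_def wH_adjacent_def by blast

lemma graph_iso_G_wH_shift:
  assumes "symp h" "\<forall>u\<in>V. w (u + d) = w u"
  shows "graph_iso (G_wH w h V) (G_wH w h ((\<lambda>u. u + d) ` V))"
  unfolding G_wH_eq_graph_on
proof (rule graph_iso_graph_on)
  show "bij_betw (\<lambda>u. u + d) V ((\<lambda>u. u + d) ` V)"
    by (simp add: bij_betw_imageI)
  show "wH_adjacent w h x y \<longleftrightarrow> wH_adjacent w h (x + d) (y + d)" if "x \<in> V" "y \<in> V" for x y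
    using assms(2) that unfolding wH_adjacent_def by auto
qed (use assms(1) symp_wH_adjacent in auto)

lemma hereditary_P_wH:
  assumes "symp h"
  shows "hereditary (P_wH w h)"
  unfolding hereditary_def graph_property_def
proof (intro conjI allI impI ballI)
  fix G assume "G \<in> P_wH w h"
  then show "is_graph G" by (simp add: P_wH_def)
next
  fix G G' assume "G \<in> P_wH w h" "is_graph G'" "graph_iso G G'"
  then obtain U where "finite U" "0 \<notin> U" "graph_iso G (G_wH w h U)"
    unfolding P_wH_def by blast
  then show "G' \<in> P_wH w h"
    using \<open>is_graph G'\<close> graph_iso_trans[OF graph_iso_sym[OF \<open>graph_iso G G'\<close>]]
    unfolding P_wH_def by blast
next
  fix G G' assume "G \<in> P_wH w h" "induced_subgraph G' G"
  then obtain U where U: "finite U" "0 \<notin> U" "graph_iso G (graph_on U (wH_adjacent w h))"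
    and "is_graph G"
    unfolding P_wH_def G_wH_eq_graph_on by blast
  then obtain H where "induced_subgraph H (graph_on U (wH_adjacent w h))" "graph_iso G' H"
    using graph_iso_induced_subgraph \<open>induced_subgraph G' G\<close> by blast
  then have "fst H \<subseteq> U" "graph_iso G' (G_wH w h (fst H))"
    unfolding induced_subgraph_graph_on G_wH_eq_graph_on by metis+
  moreover have "finite (fst H)" "0 \<notin> fst H"
    using U(1,2) \<open>fst H \<subseteq> U\<close> by (auto intro: finite_subset)
  moreover have "is_graph G'"
    using \<open>is_graph G\<close> \<open>induced_subgraph G' G\<close> by (rule is_graph_induced_subgraph)
  ultimately show "G' \<in> P_wH w h"
    unfolding P_wH_def by blast
qed

section \<open>Almost periodicity forbids long runs\<close>

lemma almost_periodic_prefix_recurs: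
  assumes "almost_periodic w"
  obtains K where "K > 0"
    and "\<And>t. \<exists>d\<ge>t. d + L \<le> t + K \<and> (\<forall>u\<in>{1..L}. w (u + d) = w u)"
proof -
  define f where "f = map w [1..<L + 1]"
  have f: "length f = L" "\<And>i. i < L \<Longrightarrow> f ! i = w (i + 1)"
    unfolding f_def by (auto simp del: upt_Suc)
  then have "factor_of_word f w"
    unfolding factor_of_word_def by (auto intro!: exI[of _ 0])
  then obtain K where K: "\<And>g. factor_of_word g w \<Longrightarrow> length g \<ge> K \<Longrightarrow> factor_of_list f g"
    using assms unfolding almost_periodic_def by blast
  have "\<exists>d\<ge>t. d + L \<le> t + Suc K \<and> (\<forall>u\<in>{1..L}. w (u + d) = w u)" for t
  proof -
    define g where "g = map w [t + 1..<t + Suc K + 1]"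
    have g: "length g = Suc K" "\<And>i. i < Suc K \<Longrightarrow> g ! i = w (i + 1 + t)"
      unfolding g_def by (auto simp del: upt_Suc simp: add.commute)
    then have "factor_of_word g w"
      unfolding factor_of_word_def by (auto intro!: exI[of _ t])
    then have "factor_of_list f g"
      using K g(1) by simp
    then obtain s where s: "s + L \<le> Suc K" "\<And>i. i < L \<Longrightarrow> f ! i = g ! (i + s)"
      unfolding factor_of_list_def f(1) g(1) by blast
    have "w (u + (t + s)) = w u" if "u \<in> {1..L}" for u
    proof -
      have "u - 1 < L" "u - 1 + s < Suc K"
        using that s(1) by auto
      then show ?thesis
        using s(2)[of "u - 1"] f(2)[of "u - 1"] g(2)[of "u - 1 + s"] that by (simp add: ac_simps)
    qed
    then show ?thesis
      using s(1) by (intro exI[of _ "t + s"]) auto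
  qed
  then show ?thesis
    using that[of "Suc K"] by blast
qed

lemma long_runs_excluded:
  assumes "symp h" "almost_periodic w" "hereditary Y" "G0 \<in> P_wH w h" "G0 \<notin> Y"
  obtains K where "K > 0"
    and "\<And>G U t. G \<in> Y \<Longrightarrow> graph_iso G (G_wH w h U) \<Longrightarrow> \<not> {t + 1..t + K} \<subseteq> U"
proof -
  obtain U0 where U0: "finite U0" "0 \<notin> U0" "graph_iso G0 (G_wH w h U0)" and "is_graph G0"
    using assms(4) unfolding P_wH_def by blast
  define L where "L = Max (insert 0 U0)"
  have U0_L: "U0 \<subseteq> {1..L}"
    using U0(1,2) unfolding L_def by (auto simp: Suc_le_eq) (metis neq0_conv)
  obtain K where "K > 0"
    and K: "\<And>t. \<exists>d\<ge>t. d + L \<le> t + K \<and> (\<forall>u\<in>{1..L}. w (u + d) = w u)"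
    using almost_periodic_prefix_recurs[OF assms(2)] by blast
  have "\<not> {t + 1..t + K} \<subseteq> U" if "G \<in> Y" "graph_iso G (G_wH w h U)" for G U t
  proof
    assume run: "{t + 1..t + K} \<subseteq> U"
    obtain d where d: "t \<le> d" "d + L \<le> t + K" "\<forall>u\<in>U0. w (u + d) = w u"
      using K[of t] U0_L by blast
    have "(\<lambda>u. u + d) ` U0 \<subseteq> U"
      using U0_L d(1,2) run by fastforce
    moreover have "graph_iso G0 (G_wH w h ((\<lambda>u. u + d) ` U0))"
      using graph_iso_trans[OF U0(3) graph_iso_G_wH_shift[OF assms(1) d(3)]] .
    ultimately have "G0 \<in> Y"
      using hereditary_mem_if_graph_on_subset[OF assms(3) that(1)] that(2) \<open>is_graph G0\<close>
      unfolding G_wH_eq_graph_on by blast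
    then show False
      using assms(5) by contradiction
  qed
  then show ?thesis
    using that \<open>K > 0\<close> by blast
qed

section \<open>Lower bound on the speed\<close>

lemma permutes_eq_id_if_preserves_consecutive:
  assumes "r permutes {1..n}" "r 1 = 1"
    and "\<And>x y. x \<in> {1..n} \<Longrightarrow> y \<in> {1..n} \<Longrightarrow> consecutive x y \<Longrightarrow> consecutive (r x) (r y)"
  shows "r = id"
proof -
  have "\<forall>j\<in>{1..k}. r j = j" if "k \<le> n" for k
    using that
  proof (induction k)
    case (Suc k)
    have IH: "\<forall>j\<in>{1..k}. r j = j"
      using Suc by simp
    show ?case
    proof (cases "k = 0")
      case True
      then show ?thesis using assms(2) by auto
    next
      case False
      have "consecutive (r k) (r (Suc k))"
        using assms(3)[of k "Suc k"] False Suc.prems by auto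
      then have "r (Suc k) = Suc k \<or> Suc (r (Suc k)) = k"
        using IH False by auto
      moreover have "Suc (r (Suc k)) \<noteq> k"
      proof
        assume "Suc (r (Suc k)) = k"
        moreover have "r (Suc k) \<in> {1..n}"
          using permutes_in_image[OF assms(1)] Suc.prems by auto
        ultimately have "r (r (Suc k)) = r (Suc k)"
          using IH by auto
        then have "r (Suc k) = Suc k"
          using permutes_inj[OF assms(1)] by (simp add: inj_eq)
        then show False
          using \<open>Suc (r (Suc k)) = k\<close> by simp
      qed
      ultimately show ?thesis
        using IH by (auto simp: le_Suc_eq)
    qed
  qed simp
  then show ?thesis
    using permutes_not_in[OF assms(1)] by fastforce
qed

lemma permutes_eq_if_consecutive_iff:
  assumes p: "p permutes {1..n}" and q: "q permutes {1..n}" and "inv p 1 = inv q 1"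
    and cons: "\<And>x y. x \<in> {1..n} \<Longrightarrow> y \<in> {1..n} \<Longrightarrow> consecutive (p x) (p y) \<longleftrightarrow> consecutive (q x) (q y)"
  shows "p = q"
proof -
  have "q \<circ> inv p = id"
  proof (rule permutes_eq_id_if_preserves_consecutive)
    show "q \<circ> inv p permutes {1..n}"
      using permutes_compose[OF permutes_inv[OF p] q] .
    show "(q \<circ> inv p) 1 = 1"
      using assms(3) permutes_inverses(1)[OF q] by simp
    fix x y assume "x \<in> {1..n}" "y \<in> {1..n}" "consecutive x y"
    moreover have "p (inv p x) = x" "p (inv p y) = y"
      using permutes_inverses(1)[OF p] by auto
    moreover have "inv p x \<in> {1..n}" "inv p y \<in> {1..n}"
      using \<open>x \<in> {1..n}\<close> \<open>y \<in> {1..n}\<close> permutes_in_image[OF permutes_inv[OF p]] by auto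
    ultimately show "consecutive ((q \<circ> inv p) x) ((q \<circ> inv p) y)"
      using cons[of "inv p x" "inv p y"] by (simp only: comp_apply)
  qed
  then have "q \<circ> (inv p \<circ> p) = p"
    by (simp add: o_assoc)
  then show ?thesis
    using permutes_inv_o(2)[OF p] by simp
qed

definition perm_graph :: "(nat \<Rightarrow> 'a) \<Rightarrow> ('a \<Rightarrow> 'a \<Rightarrow> bool) \<Rightarrow> nat \<Rightarrow> (nat \<Rightarrow> nat) \<Rightarrow> graph" where
  "perm_graph w h n p = graph_on {1..n} (\<lambda>x y. wH_adjacent w h (p x) (p y))"

lemma symp_wH_adjacent_comp: "symp h \<Longrightarrow> symp (\<lambda>x y. wH_adjacent w h (p x) (p y))"
  using symp_wH_adjacent by (fastforce intro!: sympI dest: sympD)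

lemma perm_graph_in_P_wH:
  assumes "symp h" "p permutes {1..n}"
  shows "perm_graph w h n p \<in> P_wH w h"
proof -
  have "graph_iso (perm_graph w h n p) (G_wH w h {1..n})"
    unfolding perm_graph_def G_wH_eq_graph_on
    by (rule graph_iso_graph_on[OF permutes_imp_bij[OF assms(2)]])
      (simp_all add: symp_wH_adjacent_comp symp_wH_adjacent assms(1))
  then show ?thesis
    unfolding P_wH_def perm_graph_def
    by (intro CollectI conjI is_graph_graph_on exI[of _ "{1..n}"]) simp_all
qed

lemma permutes_eq_if_perm_graph_eq:
  assumes "symp h" and p: "p permutes {1..n}" and q: "q permutes {1..n}"
    and G: "perm_graph w h n p = perm_graph w h n q"
    and letters: "\<forall>x\<in>{1..n}. w (p x) = w (q x)" and "inv p 1 = inv q 1"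
  shows "p = q"
proof (rule permutes_eq_if_consecutive_iff[OF p q \<open>inv p 1 = inv q 1\<close>])
  fix x y assume xy: "x \<in> {1..n}" "y \<in> {1..n}"
  show "consecutive (p x) (p y) \<longleftrightarrow> consecutive (q x) (q y)"
  proof (cases "x = y")
    case False
    have "{x, y} \<in> snd (perm_graph w h n p) \<longleftrightarrow> {x, y} \<in> snd (perm_graph w h n q)"
      using G by simp
    then have "wH_adjacent w h (p x) (p y) \<longleftrightarrow> wH_adjacent w h (q x) (q y)"
      using xy False unfolding perm_graph_def by (simp add: edge_graph_on symp_wH_adjacent_comp assms(1))
    moreover have "h (w (p x)) (w (p y)) \<longleftrightarrow> h (w (q x)) (w (q y))"
      using xy letters by simp
    ultimately show ?thesis
      unfolding wH_adjacent_def by blast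
  qed simp
qed

lemma fact_le_speed_P_wH:
  assumes "symp h" "finite A" "\<forall>i\<ge>1. w i \<in> A" "n \<ge> 1"
  shows "fact n \<le> speed (P_wH w h) n * card A ^ n * n"
proof -
  define \<Phi> where "\<Phi> p = (perm_graph w h n p, restrict (w \<circ> p) {1..n}, inv p 1)" for p
  define S where "S = {G \<in> P_wH w h. fst G = {1..n}}"
  have "inj_on \<Phi> {p. p permutes {1..n}}"
  proof (rule inj_onI, simp only: mem_Collect_eq)
    fix p q assume p: "p permutes {1..n}" and q: "q permutes {1..n}" and "\<Phi> p = \<Phi> q"
    then have "perm_graph w h n p = perm_graph w h n q" "inv p 1 = inv q 1"
      and "restrict (w \<circ> p) {1..n} = restrict (w \<circ> q) {1..n}"
      unfolding \<Phi>_def by simp_all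
    moreover from this(3) have "\<forall>x\<in>{1..n}. w (p x) = w (q x)"
      by (metis comp_apply restrict_apply')
    ultimately show "p = q"
      using permutes_eq_if_perm_graph_eq[OF assms(1) p q] by blast
  qed
  moreover have "\<Phi> ` {p. p permutes {1..n}} \<subseteq> S \<times> ({1..n} \<rightarrow>\<^sub>E A) \<times> {1..n}"
  proof (rule image_subsetI, simp only: mem_Collect_eq)
    fix p assume p: "p permutes {1..n}"
    have "perm_graph w h n p \<in> S"
      using perm_graph_in_P_wH[OF assms(1) p] unfolding S_def perm_graph_def by simp
    moreover have "w (p x) \<in> A" if "x \<in> {1..n}" for x
      using assms(3) permutes_in_image[OF p, of x] that by simp
    then have "restrict (w \<circ> p) {1..n} \<in> {1..n} \<rightarrow>\<^sub>E A"
      by simp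
    moreover have "inv p 1 \<in> {1..n}"
      using assms(4) permutes_in_image[OF permutes_inv[OF p]] by simp
    ultimately show "\<Phi> p \<in> S \<times> ({1..n} \<rightarrow>\<^sub>E A) \<times> {1..n}"
      unfolding \<Phi>_def by simp
  qed
  moreover have "finite S"
    unfolding S_def P_wH_def
    by (rule finite_subset[OF _ finite_graphs_on_vertex_set[of "{1..n}"]]) auto
  ultimately have "card (\<Phi> ` {p. p permutes {1..n}}) \<le> card (S \<times> ({1..n} \<rightarrow>\<^sub>E A) \<times> {1..n})"
    using assms(2) by (intro card_mono) (auto simp: finite_PiE)
  moreover have "card (\<Phi> ` {p. p permutes {1..n}}) = fact n"
    using \<open>inj_on \<Phi> _\<close> by (simp add: card_image card_permutations)
  ultimately show ?thesis
    using assms(2) by (simp add: card_cartesian_product card_PiE speed_def S_def)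
qed

lemma power_le_exp_mult_fact:
  fixes x :: real
  assumes "0 \<le> x"
  shows "x ^ n \<le> exp x * fact n"
proof -
  have "x ^ n / fact n \<le> (\<Sum>k\<le>n. x ^ k / fact k)"
    by (rule member_le_sum) (use assms in auto)
  also have "\<dots> \<le> exp x"
    using assms summable_exp_generic[of x]
    by (auto simp: exp_def divide_inverse ac_simps intro!: sum_le_suminf)
  finally show ?thesis
    by (simp add: divide_le_eq mult.commute)
qed

lemma tendsto_ln_inverse_plus_inverse:
  "(\<lambda>n::nat. C / ln (real n) + 1 / real n) \<longlonglongrightarrow> 0"
proof -
  have "filterlim (\<lambda>n::nat. ln (real n)) at_top sequentially"
    using filterlim_compose[OF ln_at_top filterlim_real_sequentially] by (simp add: o_def)
  then have "(\<lambda>n::nat. C / ln (real n)) \<longlonglongrightarrow> 0"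
    by (intro tendsto_divide_0[OF tendsto_const] filterlim_at_top_imp_at_infinity)
  moreover have "(\<lambda>n::nat. 1 / real n) \<longlonglongrightarrow> 0"
    using lim_const_over_n[of 1] by simp
  ultimately show ?thesis
    using tendsto_add[of _ 0 _ _ 0] by fastforce
qed

lemma powr_le_fact_div:
  fixes c :: real
  assumes "n \<ge> 2" "c > 0"
  shows "real n powr ((1 - ((1 + ln c) / ln (real n) + 1 / real n)) * real n) \<le> fact n / (c ^ n * real n)"
proof -
  define N where "N = real n"
  define l where "l = ln N"
  have N: "N \<ge> 2" and "l > 0"
    using assms(1) unfolding N_def l_def by simp_all
  have "(1 - ((1 + ln c) / l + 1 / N)) * N * l = N * l - N - N * ln c - l"
    using \<open>l > 0\<close> N by (simp add: field_simps)
  then have "N powr ((1 - ((1 + ln c) / l + 1 / N)) * N) = exp (N * l) / (exp N * exp (N * ln c) * exp l)"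
    unfolding powr_def l_def using N by (simp add: exp_diff)
  also have "\<dots> = N ^ n / (exp N * c ^ n * N)"
    unfolding N_def l_def using N N_def assms(2) by (simp add: exp_of_nat_mult)
  also have "\<dots> \<le> exp N * fact n / (exp N * c ^ n * N)"
    using power_le_exp_mult_fact[of N n] N assms(2) by (intro divide_right_mono) simp_all
  also have "\<dots> = fact n / (c ^ n * N)"
    by simp
  finally show ?thesis
    unfolding N_def l_def .
qed

lemma above_Bell_if_fact_le_speed:
  fixes c :: nat
  assumes "c > 0" and fact_le: "\<And>n. n \<ge> 1 \<Longrightarrow> fact n \<le> speed X n * c ^ n * n"
  shows "above_Bell X"
proof -
  define \<epsilon> where "\<epsilon> n = (1 + ln (real c)) / ln (real n) + 1 / real n" for n :: nat
  have "real n powr ((1 - \<epsilon> n) * real n) \<le> real (speed X n)" if "n \<ge> 2" for n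
  proof -
    have "real (fact n) \<le> real (speed X n * c ^ n * n)"
      using fact_le[of n] that by (simp only: of_nat_le_iff)
    then have "fact n / (real c ^ n * real n) \<le> real (speed X n)"
      using assms(1) that by (simp add: divide_le_eq ac_simps)
    then show ?thesis
      using powr_le_fact_div[OF that, of "real c"] assms(1) unfolding \<epsilon>_def by simp
  qed
  then have "\<forall>\<^sub>F n in sequentially. real (speed X n) \<ge> real n powr ((1 - \<epsilon> n) * real n)"
    unfolding eventually_sequentially by blast
  moreover have "\<epsilon> \<longlonglongrightarrow> 0"
    unfolding \<epsilon>_def[abs_def] by (rule tendsto_ln_inverse_plus_inverse)
  ultimately show ?thesis
    unfolding above_Bell_def by blast
qed

section \<open>Runs of consecutive positions\<close>

definition run_start :: "nat set \<Rightarrow> nat \<Rightarrow> nat" where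
  "run_start U u = (LEAST q. {q..u} \<subseteq> U)"

lemma run_start_least: "{q..u} \<subseteq> U \<Longrightarrow> run_start U u \<le> q"
  unfolding run_start_def by (rule Least_le)

lemma run_start_le: "u \<in> U \<Longrightarrow> run_start U u \<le> u"
  by (rule run_start_least) simp

lemma run_start_subset: "u \<in> U \<Longrightarrow> {run_start U u..u} \<subseteq> U"
  unfolding run_start_def by (rule LeastI[of _ u]) simp

lemma run_start_eq:
  assumes "u \<in> U" "run_start U u \<le> v" "v \<le> u"
  shows "run_start U v = run_start U u"
proof (rule antisym)
  show "run_start U v \<le> run_start U u"
    using run_start_subset[OF assms(1)] assms(3) by (intro run_start_least) auto
  have "v \<in> U"
    using run_start_subset[OF assms(1)] assms(2,3) by auto
  then have "{run_start U v..u} \<subseteq> {run_start U v..v} \<union> {run_start U u..u}"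
    using assms(2) by auto
  also have "\<dots> \<subseteq> U"
    using run_start_subset \<open>v \<in> U\<close> assms(1) by blast
  finally show "run_start U u \<le> run_start U v"
    by (rule run_start_least)
qed

lemma consecutive_iff_run_start:
  assumes "u \<in> U" "v \<in> U"
  shows "consecutive u v \<longleftrightarrow>
    run_start U u = run_start U v \<and> consecutive (u - run_start U u) (v - run_start U v)"
proof
  have Suc: "run_start U (Suc x) = run_start U x" if "x \<in> U" "Suc x \<in> U" for x
    using run_start_eq[OF that(2), of x] run_start_least[of x "Suc x" U] that
    by (simp add: atLeastAtMostSuc_conv)
  assume "consecutive u v"
  then show "run_start U u = run_start U v \<and> consecutive (u - run_start U u) (v - run_start U v)"
    using Suc assms run_start_le[OF assms(1)] run_start_le[OF assms(2)] by auto
next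
  assume "run_start U u = run_start U v \<and> consecutive (u - run_start U u) (v - run_start U v)"
  then show "consecutive u v"
    using run_start_le[OF assms(1)] run_start_le[OF assms(2)] by auto
qed

lemma run_offset_less:
  assumes "0 \<notin> U" "\<forall>t. \<not> {t + 1..t + K} \<subseteq> U" "u \<in> U"
  shows "u - run_start U u < K"
proof (rule ccontr)
  assume "\<not> u - run_start U u < K"
  moreover have "run_start U u \<in> U"
    using run_start_subset[OF assms(3)] run_start_le[OF assms(3)] by auto
  then have "run_start U u \<noteq> 0"
    using assms(1) by metis
  ultimately have "{(run_start U u - 1) + 1..(run_start U u - 1) + K} \<subseteq> {run_start U u..u}"
    by auto
  then show False
    using run_start_subset[OF assms(3)] assms(2) by blast
qed

text \<open>An injective f on {1..n} whose image has no run of K consecutive positions is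
  encoded by (run_head f n, run_offset f n) \<in> run_codes n K: run_head sends x to the vertex
  whose image starts the maximal run of f ` {1..n} through f x, and run_offset
  gives the position of f x in that run.\<close>

definition run_codes :: "nat \<Rightarrow> nat \<Rightarrow> ((nat \<Rightarrow> nat) \<times> (nat \<Rightarrow> nat)) set" where
  "run_codes n K = {(\<rho>, \<tau>). \<rho> \<in> {1..n} \<rightarrow>\<^sub>E {1..n} \<and> \<tau> \<in> {1..n} \<rightarrow>\<^sub>E {0..<K} \<and>
     (\<forall>x\<in>{1..n}. \<rho> (\<rho> x) = \<rho> x) \<and> inj_on (\<lambda>x. (\<rho> x, \<tau> x)) {1..n}}"

definition run_head :: "(nat \<Rightarrow> nat) \<Rightarrow> nat \<Rightarrow> nat \<Rightarrow> nat" where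
  "run_head f n = restrict (\<lambda>x. inv_into {1..n} f (run_start (f ` {1..n}) (f x))) {1..n}"

definition run_offset :: "(nat \<Rightarrow> nat) \<Rightarrow> nat \<Rightarrow> nat \<Rightarrow> nat" where
  "run_offset f n = restrict (\<lambda>x. f x - run_start (f ` {1..n}) (f x)) {1..n}"

lemma
  assumes "x \<in> {1..n}"
  shows run_head_in: "run_head f n x \<in> {1..n}"
    and f_run_head: "f (run_head f n x) = run_start (f ` {1..n}) (f x)"
proof -
  have fx: "f x \<in> f ` {1..n}"
    using assms by simp
  have s: "run_start (f ` {1..n}) (f x) \<in> f ` {1..n}"
    using run_start_subset[OF fx] run_start_le[OF fx] by auto
  show "run_head f n x \<in> {1..n}" "f (run_head f n x) = run_start (f ` {1..n}) (f x)"
    using inv_into_into[OF s] f_inv_into_f[OF s] assms unfolding run_head_def by simp_all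
qed

lemma run_head_eq_iff:
  assumes "x \<in> {1..n}" "y \<in> {1..n}"
  shows "run_head f n x = run_head f n y \<longleftrightarrow> run_start (f ` {1..n}) (f x) = run_start (f ` {1..n}) (f y)"
proof
  assume "run_head f n x = run_head f n y"
  then show "run_start (f ` {1..n}) (f x) = run_start (f ` {1..n}) (f y)"
    using f_run_head[OF assms(1), of f] f_run_head[OF assms(2), of f] by metis
qed (use assms in \<open>simp add: run_head_def\<close>)

lemma consecutive_iff_run_head_offset:
  assumes "x \<in> {1..n}" "y \<in> {1..n}"
  shows "consecutive (f x) (f y) \<longleftrightarrow>
    run_head f n x = run_head f n y \<and> consecutive (run_offset f n x) (run_offset f n y)"
proof -
  have "run_offset f n x = f x - run_start (f ` {1..n}) (f x)"
    and "run_offset f n y = f y - run_start (f ` {1..n}) (f y)"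
    using assms unfolding run_offset_def by simp_all
  moreover have "f x \<in> f ` {1..n}" "f y \<in> f ` {1..n}"
    using assms by simp_all
  ultimately show ?thesis
    using consecutive_iff_run_start run_head_eq_iff[OF assms] by presburger
qed

lemma run_codes_run_head_offset:
  assumes inj: "inj_on f {1..n}" and "0 \<notin> f ` {1..n}"
    and "\<forall>t. \<not> {t + 1..t + K} \<subseteq> f ` {1..n}"
  shows "(run_head f n, run_offset f n) \<in> run_codes n K"
proof -
  let ?s = "\<lambda>x. run_start (f ` {1..n}) (f x)"
  have "run_head f n \<in> {1..n} \<rightarrow>\<^sub>E {1..n}"
    using run_head_in unfolding run_head_def by auto
  moreover have "run_offset f n \<in> {1..n} \<rightarrow>\<^sub>E {0..<K}"
    using run_offset_less[OF assms(2,3)] unfolding run_offset_def by auto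
  moreover have "run_head f n (run_head f n x) = run_head f n x" if "x \<in> {1..n}" for x
  proof -
    have "run_start (f ` {1..n}) (?s x) = ?s x"
      using run_start_eq[of "f x" _ "?s x"] run_start_le[of "f x"] that by auto
    then show ?thesis
      using run_head_eq_iff[OF run_head_in that] f_run_head[OF that] that by simp
  qed
  moreover have "inj_on (\<lambda>x. (run_head f n x, run_offset f n x)) {1..n}"
  proof (rule inj_onI)
    fix x y assume xy: "x \<in> {1..n}" "y \<in> {1..n}"
      and eq: "(run_head f n x, run_offset f n x) = (run_head f n y, run_offset f n y)"
    then have "?s x = ?s y"
      using run_head_eq_iff[OF xy] by simp
    moreover have "f x - ?s x = f y - ?s y"
      using eq xy unfolding run_offset_def by simp
    moreover have "?s x \<le> f x" "?s y \<le> f y"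
      using xy by (simp_all add: run_start_le)
    ultimately have "f x = f y"
      by linarith
    then show "x = y"
      using inj xy by (simp add: inj_on_eq_iff)
  qed
  ultimately show ?thesis
    unfolding run_codes_def by blast
qed

section \<open>Upper bound on the speed of a proper subclass\<close>

lemma idempotent_PiE_eqI:
  assumes "\<rho>1 \<in> I \<rightarrow>\<^sub>E I" "\<rho>2 \<in> I \<rightarrow>\<^sub>E I" "\<forall>x\<in>I. \<rho>1 (\<rho>1 x) = \<rho>1 x" "\<forall>x\<in>I. \<rho>2 (\<rho>2 x) = \<rho>2 x"
    and im: "\<rho>1 ` I = \<rho>2 ` I" and re: "restrict \<rho>1 (I - \<rho>1 ` I) = restrict \<rho>2 (I - \<rho>2 ` I)"
  shows "\<rho>1 = \<rho>2"
proof
  fix x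
  consider "x \<notin> I" | "x \<in> \<rho>1 ` I" | "x \<in> I - \<rho>1 ` I"
    by blast
  then show "\<rho>1 x = \<rho>2 x"
  proof cases
    case 1
    then show ?thesis using assms(1,2) by (metis PiE_arb)
  next
    case 2
    moreover from this have "x \<in> \<rho>2 ` I"
      using im by simp
    ultimately show ?thesis
      using assms(3,4) by (auto elim!: imageE)
  next
    case 3
    then show ?thesis using re im by (metis restrict_apply')
  qed
qed

lemma card_idempotent_maps_image_in:
  assumes "finite I" "SS \<subseteq> Pow I"
  shows "card {\<rho> \<in> I \<rightarrow>\<^sub>E I. (\<forall>x\<in>I. \<rho> (\<rho> x) = \<rho> x) \<and> \<rho> ` I \<in> SS}
    \<le> (\<Sum>S\<in>SS. card I ^ (card I - card S))"
    (is "card ?R \<le> _")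
proof -
  define \<Psi> where "\<Psi> \<rho> = (\<rho> ` I, restrict \<rho> (I - \<rho> ` I))" for \<rho> :: "'a \<Rightarrow> 'a"
  have inj: "inj_on \<Psi> ?R"
  proof (rule inj_onI)
    fix \<rho>1 \<rho>2 assume "\<rho>1 \<in> ?R" "\<rho>2 \<in> ?R" "\<Psi> \<rho>1 = \<Psi> \<rho>2"
    moreover from \<open>\<Psi> \<rho>1 = \<Psi> \<rho>2\<close> obtain "\<rho>1 ` I = \<rho>2 ` I"
      and "restrict \<rho>1 (I - \<rho>1 ` I) = restrict \<rho>2 (I - \<rho>2 ` I)"
      unfolding \<Psi>_def by (rule Pair_inject)
    ultimately show "\<rho>1 = \<rho>2"
      using idempotent_PiE_eqI[of \<rho>1 I \<rho>2] by blast
  qed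
  have image: "\<Psi> ` ?R \<subseteq> Sigma SS (\<lambda>S. (I - S) \<rightarrow>\<^sub>E I)"
  proof (rule image_subsetI)
    fix \<rho> assume "\<rho> \<in> ?R"
    then have \<rho>: "\<rho> \<in> I \<rightarrow>\<^sub>E I" and "\<rho> ` I \<in> SS"
      by auto
    then show "\<Psi> \<rho> \<in> Sigma SS (\<lambda>S. (I - S) \<rightarrow>\<^sub>E I)"
      unfolding \<Psi>_def using PiE_mem[OF \<rho>] by (simp add: restrict_PiE_iff)
  qed
  have "finite SS"
    using finite_subset[OF assms(2)] assms(1) by simp
  have "card ?R = card (\<Psi> ` ?R)"
    using inj by (rule card_image[symmetric])
  also have "\<dots> \<le> card (Sigma SS (\<lambda>S. (I - S) \<rightarrow>\<^sub>E I))"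
    using \<open>finite SS\<close> assms(1) image by (intro card_mono finite_SigmaI finite_PiE) auto
  also have "\<dots> = (\<Sum>S\<in>SS. card ((I - S) \<rightarrow>\<^sub>E I))"
    using \<open>finite SS\<close> assms(1) by (intro card_SigmaI) (simp_all add: finite_PiE)
  also have "\<dots> = (\<Sum>S\<in>SS. card I ^ (card I - card S))"
    using assms by (intro sum.cong) (auto simp: card_PiE card_Diff_subset finite_subset)
  finally show ?thesis .
qed

lemma card_idempotent_maps_large_image:
  fixes r :: real
  assumes "n \<ge> 1"
  shows "real (card {\<rho> \<in> {1..n} \<rightarrow>\<^sub>E {1..n}. (\<forall>x\<in>{1..n}. \<rho> (\<rho> x) = \<rho> x) \<and> r \<le> real (card (\<rho> ` {1..n}))})
    \<le> 2 ^ n * real n powr (real n - r)"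
    (is "real (card ?R) \<le> _")
proof -
  define SS where "SS = {S \<in> Pow {1..n}. r \<le> real (card S)}"
  have R: "?R = {\<rho> \<in> {1..n} \<rightarrow>\<^sub>E {1..n}. (\<forall>x\<in>{1..n}. \<rho> (\<rho> x) = \<rho> x) \<and> \<rho> ` {1..n} \<in> SS}"
    unfolding SS_def by (auto dest: PiE_mem)
  have "SS \<subseteq> Pow {1..n}"
    unfolding SS_def by blast
  then have "card ?R \<le> (\<Sum>S\<in>SS. n ^ (n - card S))"
    using card_idempotent_maps_image_in[of "{1..n}" SS] unfolding R by simp
  then have "real (card ?R) \<le> real (\<Sum>S\<in>SS. n ^ (n - card S))"
    by (simp only: of_nat_le_iff)
  also have "\<dots> = (\<Sum>S\<in>SS. real n ^ (n - card S))"
    by simp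
  also have "\<dots> \<le> (\<Sum>S\<in>SS. real n powr (real n - r))"
  proof (rule sum_mono)
    fix S assume "S \<in> SS"
    then have "card S \<le> n" "r \<le> real (card S)"
      unfolding SS_def using card_mono[of "{1..n}" S] by auto
    then have "real (n - card S) \<le> real n - r"
      by simp
    moreover have "real n ^ (n - card S) = real n powr real (n - card S)"
      by (rule powr_realpow[symmetric]) (use assms in simp)
    ultimately show "real n ^ (n - card S) \<le> real n powr (real n - r)"
      using assms by (simp add: powr_mono)
  qed
  also have "\<dots> \<le> 2 ^ n * real n powr (real n - r)"
  proof -
    have "card SS \<le> card (Pow {1..n})"
      unfolding SS_def by (rule card_mono) auto
    then show ?thesis
      by (simp add: card_Pow mult_right_mono)
  qed
  finally show ?thesis .
qed

lemma card_run_codes: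
  assumes "K > 0" "n \<ge> 1"
  shows "real (card (run_codes n K)) \<le> real K ^ n * 2 ^ n * real n powr (real n - real n / real K)"
proof -
  define R where "R = {\<rho> \<in> {1..n} \<rightarrow>\<^sub>E {1..n}.
    (\<forall>x\<in>{1..n}. \<rho> (\<rho> x) = \<rho> x) \<and> real n / real K \<le> card (\<rho> ` {1..n})}"
  have "run_codes n K \<subseteq> R \<times> ({1..n} \<rightarrow>\<^sub>E {0..<K})"
  proof clarify
    fix \<rho> \<tau> assume "(\<rho>, \<tau>) \<in> run_codes n K"
    then have codes: "\<rho> \<in> {1..n} \<rightarrow>\<^sub>E {1..n}" "\<tau> \<in> {1..n} \<rightarrow>\<^sub>E {0..<K}"
      "\<forall>x\<in>{1..n}. \<rho> (\<rho> x) = \<rho> x" "inj_on (\<lambda>x. (\<rho> x, \<tau> x)) {1..n}"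
      unfolding run_codes_def by auto
    have "n = card ((\<lambda>x. (\<rho> x, \<tau> x)) ` {1..n})"
      using codes(4) by (simp add: card_image)
    also have "\<dots> \<le> card (\<rho> ` {1..n} \<times> {0..<K})"
      using codes(2) by (intro card_mono) auto
    finally have "real n \<le> real (card (\<rho> ` {1..n})) * real K"
      by (simp add: card_cartesian_product flip: of_nat_mult)
    then have "real n / real K \<le> card (\<rho> ` {1..n})"
      using assms(1) by (simp add: divide_le_eq)
    then show "\<rho> \<in> R \<and> \<tau> \<in> {1..n} \<rightarrow>\<^sub>E {0..<K}"
      using codes unfolding R_def by blast
  qed
  moreover have "finite R"
    unfolding R_def by (rule finite_subset[of _ "{1..n} \<rightarrow>\<^sub>E {1..n}"]) (auto simp: finite_PiE)
  ultimately have "card (run_codes n K) \<le> card (R \<times> ({1..n} \<rightarrow>\<^sub>E {0..<K}))"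
    by (intro card_mono) (auto simp: finite_PiE)
  also have "\<dots> = card R * K ^ n"
    by (simp add: card_cartesian_product card_PiE)
  finally have "real (card (run_codes n K)) \<le> real (card R) * real K ^ n"
    by (simp flip: of_nat_mult of_nat_power)
  also have "\<dots> \<le> 2 ^ n * real n powr (real n - real n / real K) * real K ^ n"
    using card_idempotent_maps_large_image[OF assms(2)] unfolding R_def by (intro mult_right_mono) auto
  finally show ?thesis
    by (simp add: ac_simps)
qed

definition run_graph ::
  "('a \<Rightarrow> 'a \<Rightarrow> bool) \<Rightarrow> nat \<Rightarrow> (nat \<Rightarrow> 'a) \<Rightarrow> (nat \<Rightarrow> nat) \<Rightarrow> (nat \<Rightarrow> nat) \<Rightarrow> graph" where
  "run_graph h n \<alpha> \<rho> \<tau> =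
     graph_on {1..n} (\<lambda>x y. (\<rho> x = \<rho> y \<and> consecutive (\<tau> x) (\<tau> y)) \<longleftrightarrow> \<not> h (\<alpha> x) (\<alpha> y))"

lemma run_graph_representation:
  assumes "symp h" "\<forall>i\<ge>1. w i \<in> A" "is_graph G" and V: "fst G = {1..n}"
    and iso: "graph_iso G (G_wH w h U)" and "0 \<notin> U" "\<forall>t. \<not> {t + 1..t + K} \<subseteq> U"
  obtains \<alpha> \<rho> \<tau> where "\<alpha> \<in> {1..n} \<rightarrow>\<^sub>E A" "(\<rho>, \<tau>) \<in> run_codes n K" "G = run_graph h n \<alpha> \<rho> \<tau>"
proof -
  obtain f where f: "bij_betw f {1..n} U"
    and edges: "\<forall>x\<in>{1..n}. \<forall>y\<in>{1..n}. {x, y} \<in> snd G \<longleftrightarrow> {f x, f y} \<in> snd (graph_on U (wH_adjacent w h))"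
    using iso unfolding graph_iso_def G_wH_eq_graph_on fst_graph_on V by blast
  then have inj: "inj_on f {1..n}" and U: "f ` {1..n} = U"
    by (auto simp: bij_betw_def)
  define \<alpha> where "\<alpha> = restrict (w \<circ> f) {1..n}"
  have "w (f x) \<in> A" if "x \<in> {1..n}" for x
  proof -
    have "f x \<in> U"
      using U that by blast
    then have "f x \<ge> 1"
      using \<open>0 \<notin> U\<close> by (metis less_one not_le)
    then show ?thesis
      using assms(2) by blast
  qed
  then have "\<alpha> \<in> {1..n} \<rightarrow>\<^sub>E A"
    unfolding \<alpha>_def by simp
  moreover have "(run_head f n, run_offset f n) \<in> run_codes n K"
    using run_codes_run_head_offset[OF inj] assms(6,7) unfolding U by blast
  moreover have "graph_on {1..n} (\<lambda>x y. {x, y} \<in> snd G) = run_graph h n \<alpha> (run_head f n) (run_offset f n)"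
    unfolding run_graph_def
  proof (rule graph_on_cong)
    fix x y assume xy: "x \<in> {1..n}" "y \<in> {1..n}" "x \<noteq> y"
    then have "f x \<in> U" "f y \<in> U" "f x \<noteq> f y"
      using U inj by (auto simp: inj_on_eq_iff)
    then have "{x, y} \<in> snd G \<longleftrightarrow> wH_adjacent w h (f x) (f y)"
      using edges xy(1,2) by (simp add: edge_graph_on[OF symp_wH_adjacent[OF assms(1)]])
    moreover have "\<alpha> x = w (f x)" "\<alpha> y = w (f y)"
      using xy unfolding \<alpha>_def by simp_all
    ultimately show "{x, y} \<in> snd G \<longleftrightarrow> ((run_head f n x = run_head f n y \<and>
        consecutive (run_offset f n x) (run_offset f n y)) \<longleftrightarrow> \<not> h (\<alpha> x) (\<alpha> y))"
      using consecutive_iff_run_head_offset[OF xy(1,2), of f] unfolding wH_adjacent_def by simp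
  qed
  then have "G = run_graph h n \<alpha> (run_head f n) (run_offset f n)"
    using graph_eq_graph_on[OF assms(3)] V by simp
  ultimately show ?thesis
    using that by blast
qed

lemma speed_le_if_no_long_runs:
  assumes "symp h" "finite A" "\<forall>i\<ge>1. w i \<in> A" "Y \<subseteq> P_wH w h" "K > 0" "n \<ge> 1"
    and no_run: "\<And>G U t. G \<in> Y \<Longrightarrow> graph_iso G (G_wH w h U) \<Longrightarrow> \<not> {t + 1..t + K} \<subseteq> U"
  shows "real (speed Y n) \<le> (real (card A) * real K * 2) ^ n * real n powr (real n - real n / real K)"
proof -
  let ?codes = "({1..n} \<rightarrow>\<^sub>E A) \<times> run_codes n K"
  let ?\<Psi> = "\<lambda>(\<alpha>, \<rho>, \<tau>). run_graph h n \<alpha> \<rho> \<tau>"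
  have "{G \<in> Y. fst G = {1..n}} \<subseteq> ?\<Psi> ` ?codes"
  proof
    fix G assume "G \<in> {G \<in> Y. fst G = {1..n}}"
    then have "G \<in> Y" "fst G = {1..n}"
      by auto
    moreover obtain U where "0 \<notin> U" "graph_iso G (G_wH w h U)" "is_graph G"
      using assms(4) \<open>G \<in> Y\<close> unfolding P_wH_def by blast
    ultimately obtain \<alpha> \<rho> \<tau> where "\<alpha> \<in> {1..n} \<rightarrow>\<^sub>E A" "(\<rho>, \<tau>) \<in> run_codes n K"
      "G = run_graph h n \<alpha> \<rho> \<tau>"
      using run_graph_representation[OF assms(1,3)] no_run by metis
    then show "G \<in> ?\<Psi> ` ?codes"
      by (intro image_eqI[of _ _ "(\<alpha>, \<rho>, \<tau>)"]) simp_all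
  qed
  moreover have "finite (run_codes n K)"
    unfolding run_codes_def
    by (rule finite_subset[of _ "({1..n} \<rightarrow>\<^sub>E {1..n}) \<times> ({1..n} \<rightarrow>\<^sub>E {0..<K})"])
      (auto simp: finite_PiE)
  ultimately have "speed Y n \<le> card (?\<Psi> ` ?codes)"
    unfolding speed_def using assms(2) by (intro card_mono) (auto simp: finite_PiE)
  also have "\<dots> \<le> card A ^ n * card (run_codes n K)"
    using card_image_le[of ?codes ?\<Psi>] \<open>finite (run_codes n K)\<close> assms(2)
    by (simp add: card_cartesian_product card_PiE finite_PiE)
  finally have "real (speed Y n) \<le> real (card A) ^ n * real (card (run_codes n K))"
    by (simp flip: of_nat_mult of_nat_power)
  also have "\<dots> \<le> real (card A) ^ n * (real K ^ n * 2 ^ n * real n powr (real n - real n / real K))"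
    using card_run_codes[OF assms(5,6)] by (intro mult_left_mono) auto
  finally show ?thesis
    by (simp add: power_mult_distrib ac_simps)
qed

lemma ln_le_if_powr_le:
  fixes C e :: real
  assumes "n \<ge> 2" "C > 0" "K > 0" "\<bar>e\<bar> < 1 / (2 * real K)"
    and "real n powr ((1 - e) * real n) \<le> C ^ n * real n powr (real n - real n / real K)"
  shows "ln (real n) \<le> 2 * real K * \<bar>ln C\<bar>"
proof -
  define N where "N = real n"
  define l where "l = ln N"
  have N: "N \<ge> 2" and "l > 0"
    using assms(1) unfolding N_def l_def by simp_all
  have "ln (N powr ((1 - e) * N)) \<le> ln (C ^ n * N powr (N - N / real K))"
    using assms(5) N assms(2) unfolding N_def by (subst ln_le_cancel_iff) auto
  then have "(1 - e) * N * l \<le> N * ln C + (N - N / real K) * l"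
    using N assms(2) unfolding l_def N_def by (simp add: ln_mult ln_realpow ln_powr)
  then have "N * ((1 / real K - e) * l) \<le> N * ln C"
    by (simp add: algebra_simps)
  then have "(1 / real K - e) * l \<le> \<bar>ln C\<bar>"
    using N by simp
  moreover have "1 / (2 * real K) \<le> 1 / real K - e"
    using assms(4) by (simp add: field_simps abs_less_iff)
  then have "l / (2 * real K) \<le> (1 / real K - e) * l"
    using \<open>l > 0\<close> mult_right_mono[of "1 / (2 * real K)" "1 / real K - e" l] by simp
  ultimately have "l / (2 * real K) \<le> \<bar>ln C\<bar>"
    by linarith
  then show ?thesis
    using assms(3) unfolding l_def N_def by (simp add: divide_le_eq mult.commute)
qed

lemma not_above_Bell_if_speed_le:
  fixes C :: real
  assumes "C > 0" "K > 0"
    and speed_le: "\<And>n. n \<ge> 1 \<Longrightarrow> real (speed X n) \<le> C ^ n * real n powr (real n - real n / real K)"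
  shows "\<not> above_Bell X"
proof
  assume "above_Bell X"
  then obtain \<epsilon> :: "nat \<Rightarrow> real" where "\<epsilon> \<longlonglongrightarrow> 0"
    and lower: "\<forall>\<^sub>F n in sequentially. real (speed X n) \<ge> real n powr ((1 - \<epsilon> n) * real n)"
    unfolding above_Bell_def by blast
  have "\<forall>\<^sub>F n in sequentially. \<bar>\<epsilon> n\<bar> < 1 / (2 * real K)"
    using tendstoD[OF \<open>\<epsilon> \<longlonglongrightarrow> 0\<close>, of "1 / (2 * real K)"] assms(2) by (simp add: dist_real_def)
  moreover have "\<forall>\<^sub>F n in sequentially. 2 * real K * \<bar>ln C\<bar> + 1 \<le> ln (real n)"
    using filterlim_compose[OF ln_at_top filterlim_real_sequentially]
    unfolding filterlim_at_top o_def by blast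
  moreover have "\<forall>\<^sub>F n in sequentially. n \<ge> 2"
    by (rule eventually_ge_at_top)
  ultimately obtain n where "\<bar>\<epsilon> n\<bar> < 1 / (2 * real K)" "2 * real K * \<bar>ln C\<bar> + 1 \<le> ln (real n)"
    "n \<ge> 2" "real (speed X n) \<ge> real n powr ((1 - \<epsilon> n) * real n)"
    using eventually_happens'[OF sequentially_bot eventually_conj[OF _ eventually_conj[OF _ eventually_conj[OF _ lower]]]]
    by blast
  moreover from this have "ln (real n) \<le> 2 * real K * \<bar>ln C\<bar>"
    using speed_le[of n] assms(1,2) by (intro ln_le_if_powr_le[of n C K "\<epsilon> n"]) auto
  ultimately show False
    by linarith
qed

theorem theorem3p10:
  fixes w :: "nat \<Rightarrow> 'a" and A :: "'a set" and h :: "'a \<Rightarrow> 'a \<Rightarrow> bool"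
  assumes "finite A"
    and "\<forall>i\<ge>1. w i \<in> A"
    and "almost_periodic w"
    and "\<forall>a b. h a b \<longrightarrow> a \<in> A \<and> b \<in> A"
    and "\<forall>a b. h a b \<longrightarrow> h b a"
  shows "minimal_above_Bell (P_wH w h)"
proof -
  have "symp h"
    using assms(5) unfolding symp_def .
  have "card A > 0"
    using assms(1,2) card_gt_0_iff by blast
  have "\<not> above_Bell Y" if Y: "hereditary Y" "Y \<subset> P_wH w h" for Y
  proof -
    obtain G0 where "G0 \<in> P_wH w h" "G0 \<notin> Y"
      using Y(2) by blast
    then obtain K where "K > 0"
      and "\<And>G U t. G \<in> Y \<Longrightarrow> graph_iso G (G_wH w h U) \<Longrightarrow> \<not> {t + 1..t + K} \<subseteq> U"
      using long_runs_excluded[OF \<open>symp h\<close> assms(3) Y(1)] by blast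
    then have "real (speed Y n) \<le> (real (card A) * real K * 2) ^ n * real n powr (real n - real n / real K)"
      if "n \<ge> 1" for n
      using speed_le_if_no_long_runs[OF \<open>symp h\<close> assms(1,2)] Y(2) that by blast
    moreover have "real (card A) * real K * 2 > 0"
      using \<open>card A > 0\<close> \<open>K > 0\<close> by simp
    ultimately show ?thesis
      using not_above_Bell_if_speed_le \<open>K > 0\<close> by blast
  qed
  moreover have "above_Bell (P_wH w h)"
    using \<open>card A > 0\<close> fact_le_speed_P_wH[OF \<open>symp h\<close> assms(1,2)] by (rule above_Bell_if_fact_le_speed)
  ultimately show ?thesis
    using hereditary_P_wH[OF \<open>symp h\<close>] unfolding minimal_above_Bell_def by blast
qed

end
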